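(* Consider the following game over slots $1,\dots,T$ with $N\ge2$ users and an integer $1\le k\le N$. The BS chooses a probability distribution on $k$-element subsets of the users. In every slot it independently schedules a $k$-subset drawn from this distribution. The adversary chooses a blocking matrix $\sigma\in\{0,1\}^{N\times T}$, where $\sigma_i(t)=0$ means user $i$ is blocked in slot $t$. Feasibility means $\sum_{i,t}(1-\sigma_i(t))\le\alpha T$ and $\sum_i(1-\sigma_i(t))\le k_a$ for each $t$, where $k_a\ge1$ and $0<\alpha<1$. Ages satisfy $a_i(1)=1$, $a_i(t+1)=1$ if user $i$ is scheduled and not blocked in slot $t$, and $a_i(t+1)=a_i(t)+1$ otherwise. The payoff $\Delta$ is the average age $\frac1T\sum_{t=1}^T\frac1N\sum_i\mathbb E[a_i(t)]$. Consider: - a BS distribution under which every user is scheduled in a given slot with probability $\frac kN$; and - the adversarial action that blocks one arbitrary user exactly in the slots $\frac{(1-\alpha)T}2+1,\dots,\frac{(1+\alpha)T}2$ and nothing else. Then, for all sufficiently large $T$ with $\alpha T\in\mathbb Z$ and $(1-\alpha)T$ even, this pair is a Stackelberg equilibrium with the BS as leader. That is: - the adversarial action maximizes $\Delta$ against the given BS distribution; and - the given BS distribution minimizes $\max_{\sigma\text{ feasible}}\Delta$ over all distributions on $k$-subsets. *)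

theory Defs
  imports Complex_Main "HOL-Library.FuncSet"
begin

text \<open>Users are 0,...,N-1; slots are 1,...,T.
  A schedule is a function from slots to scheduled k-subsets.
  A blocking matrix sigma :: nat => nat => nat, sigma i t = 0 means user i blocked in slot t.\<close>

definition ksets :: "nat \<Rightarrow> nat \<Rightarrow> nat set set" where
  "ksets N k = {S. S \<subseteq> {..<N} \<and> card S = k}"

definition bs_dist :: "nat \<Rightarrow> nat \<Rightarrow> (nat set \<Rightarrow> real) \<Rightarrow> bool" where
  "bs_dist N k p \<longleftrightarrow> (\<forall>S\<in>ksets N k. 0 \<le> p S) \<and> (\<Sum>S\<in>ksets N k. p S) = 1"

fun age :: "(nat \<Rightarrow> nat \<Rightarrow> nat) \<Rightarrow> (nat \<Rightarrow> nat set) \<Rightarrow> nat \<Rightarrow> nat \<Rightarrow> nat" where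
  "age \<sigma> f i 0 = 1"
| "age \<sigma> f i (Suc 0) = 1"
| "age \<sigma> f i (Suc (Suc t)) =
     (if i \<in> f (Suc t) \<and> \<sigma> i (Suc t) \<noteq> 0 then 1 else age \<sigma> f i (Suc t) + 1)"

text \<open>Expected age E[a_i(t)] when the schedule in each slot 1..T is drawn independently from p.\<close>
definition exp_age :: "nat \<Rightarrow> nat \<Rightarrow> nat \<Rightarrow> (nat set \<Rightarrow> real) \<Rightarrow> (nat \<Rightarrow> nat \<Rightarrow> nat) \<Rightarrow> nat \<Rightarrow> nat \<Rightarrow> real" where
  "exp_age N k T p \<sigma> i t =
     (\<Sum>f\<in>PiE {1..T} (\<lambda>_. ksets N k). (\<Prod>s\<in>{1..T}. p (f s)) * real (age \<sigma> f i t))"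

definition avg_age :: "nat \<Rightarrow> nat \<Rightarrow> nat \<Rightarrow> (nat set \<Rightarrow> real) \<Rightarrow> (nat \<Rightarrow> nat \<Rightarrow> nat) \<Rightarrow> real" where
  "avg_age N k T p \<sigma> =
     (1 / real T) * (\<Sum>t=1..T. (1 / real N) * (\<Sum>i<N. exp_age N k T p \<sigma> i t))"

definition feasible :: "nat \<Rightarrow> nat \<Rightarrow> nat \<Rightarrow> real \<Rightarrow> (nat \<Rightarrow> nat \<Rightarrow> nat) \<Rightarrow> bool" where
  "feasible N T ka \<alpha> \<sigma> \<longleftrightarrow>
     (\<forall>i<N. \<forall>t\<in>{1..T}. \<sigma> i t \<in> {0, 1}) \<and>
     real (\<Sum>i<N. \<Sum>t=1..T. 1 - \<sigma> i t) \<le> \<alpha> * real T \<and>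
     (\<forall>t\<in>{1..T}. (\<Sum>i<N. 1 - \<sigma> i t) \<le> ka)"

end

theory Submission
  imports Defs
begin

text \<open>Write r = 1 - k / N for the probability that a user is not scheduled in a slot under the
  leader's distribution. A user blocked exactly on the slots B has expected age
  \<Sum>y\<le>t. r ^ (number of unblocked slots in [y, t)) in slot t, so the payoff is an average of
  per-user total ages. Blocking the slots of B in increasing order, slot x raises the total age by
  (1 - r ^ (T - x)) times the expected age just before x. For one user with the whole budget
  L = \<alpha> T, Chebyshev's sum inequality and the convexity of d \<mapsto> r ^ d show that the window in the
  middle of the horizon is the worst case; spreading the budget over several users loses a term of
  order L / 2, which for large T outweighs the window's own loss of order L r ^ m.
  Any other distribution of the leader has miss probabilities with the same sum N r, and since a
  total age is a sum of powers of the miss probability, the power-mean inequality shows that the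
  window placed on a suitable user hurts it at least as much.\<close>

section \<open>Expected age in closed form\<close>

lemma age_eq_sum_prod:
  "real (age \<sigma> f i (Suc n)) =
    (\<Sum>y\<in>{1..Suc n}. \<Prod>s\<in>{y..<Suc n}. if i \<in> f s \<and> \<sigma> i s \<noteq> 0 then 0 else 1::real)"
proof (induction n)
  case 0
  then show ?case by simp
next
  case (Suc n)
  let ?miss = "\<lambda>s. if i \<in> f s \<and> \<sigma> i s \<noteq> 0 then 0 else 1::real"
  have "(\<Sum>y\<in>{1..Suc (Suc n)}. \<Prod>s\<in>{y..<Suc (Suc n)}. ?miss s)
      = 1 + (\<Sum>y\<in>{1..Suc n}. ?miss (Suc n) * (\<Prod>s\<in>{y..<Suc n}. ?miss s))"
    by (simp add: atLeastLessThanSuc mult.commute)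
  also have "\<dots> = 1 + ?miss (Suc n) * real (age \<sigma> f i (Suc n))"
    by (simp add: Suc sum_distrib_left)
  finally show ?case by simp
qed

lemma sum_PiE_prod_independent:
  fixes p :: "'b \<Rightarrow> real"
  assumes "finite I" "finite A" "J \<subseteq> I" "sum p A = 1"
  shows "(\<Sum>f\<in>PiE I (\<lambda>_. A). (\<Prod>s\<in>I. p (f s)) * (\<Prod>s\<in>J. g s (f s)))
       = (\<Prod>s\<in>J. \<Sum>S\<in>A. p S * g s S)"
proof -
  have "(\<Sum>f\<in>PiE I (\<lambda>_. A). (\<Prod>s\<in>I. p (f s)) * (\<Prod>s\<in>J. g s (f s)))
      = (\<Sum>f\<in>PiE I (\<lambda>_. A). \<Prod>s\<in>I. p (f s) * (if s \<in> J then g s (f s) else 1))"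
    using assms(1,3) by (simp add: prod.distrib prod.If_cases Int_absorb1)
  also have "\<dots> = (\<Prod>s\<in>I. \<Sum>S\<in>A. p S * (if s \<in> J then g s S else 1))"
    using assms(1,2) by (intro prod_sum_PiE[symmetric]) auto
  also have "\<dots> = (\<Prod>s\<in>I. if s \<in> J then \<Sum>S\<in>A. p S * g s S else 1)"
    using assms(4) by (intro prod.cong) auto
  also have "\<dots> = (\<Prod>s\<in>J. \<Sum>S\<in>A. p S * g s S)"
    using assms(1,3) by (simp add: prod.If_cases Int_absorb1)
  finally show ?thesis .
qed

definition sched_prob :: "nat \<Rightarrow> nat \<Rightarrow> (nat set \<Rightarrow> real) \<Rightarrow> nat \<Rightarrow> real" where
  "sched_prob N k p i = (\<Sum>S\<in>{S\<in>ksets N k. i \<in> S}. p S)"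

lemma finite_ksets: "finite (ksets N k)"
  unfolding ksets_def by (rule finite_subset[of _ "Pow {..<N}"]) auto

lemma sched_prob_bounds:
  assumes "bs_dist N k p"
  shows "0 \<le> sched_prob N k p i" "sched_prob N k p i \<le> 1"
proof -
  show "0 \<le> sched_prob N k p i"
    using assms unfolding sched_prob_def bs_dist_def by (intro sum_nonneg) auto
  have "sched_prob N k p i \<le> (\<Sum>S\<in>ksets N k. p S)"
    using assms finite_ksets unfolding sched_prob_def bs_dist_def by (intro sum_mono2) auto
  then show "sched_prob N k p i \<le> 1"
    using assms unfolding bs_dist_def by simp
qed

lemma sum_sched_prob:
  assumes "bs_dist N k p"
  shows "(\<Sum>i<N. sched_prob N k p i) = real k"
proof -
  have "(\<Sum>i<N. sched_prob N k p i) = (\<Sum>S\<in>ksets N k. \<Sum>i<N. if i \<in> S then p S else 0)"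
    unfolding sched_prob_def using finite_ksets by (simp add: sum.inter_filter sum.swap[of _ "{..<N}"])
  also have "\<dots> = (\<Sum>S\<in>ksets N k. real k * p S)"
  proof (rule sum.cong[OF refl])
    fix S assume "S \<in> ksets N k"
    then have "{..<N} \<inter> S = S" "card S = k" unfolding ksets_def by auto
    then show "(\<Sum>i<N. if i \<in> S then p S else 0) = real k * p S"
      by (simp add: sum.If_cases)
  qed
  also have "\<dots> = real k"
    using assms unfolding bs_dist_def by (simp add: sum_distrib_left[symmetric])
  finally show ?thesis .
qed

text \<open>The age in slot t counts the y \<le> t such that the user was not served in any slot of [y, t).
  For a user blocked exactly on B and missed with probability r in each other slot, mean_age is
  the expectation of this count.\<close>

definition mean_age :: "real \<Rightarrow> nat set \<Rightarrow> nat \<Rightarrow> real" where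
  "mean_age r B t = (\<Sum>y\<in>{1..t}. r ^ card ({y..<t} - B))"

definition total_age :: "real \<Rightarrow> nat \<Rightarrow> nat set \<Rightarrow> real" where
  "total_age r T B = (\<Sum>t\<in>{1..T}. mean_age r B t)"

definition age_increase :: "real \<Rightarrow> nat \<Rightarrow> nat set \<Rightarrow> real" where
  "age_increase r T B = total_age r T B - total_age r T {}"

lemma exp_age_eq_mean_age:
  assumes p: "bs_dist N k p" and t: "1 \<le> t" "t \<le> T"
  shows "exp_age N k T p \<sigma> i t = mean_age (1 - sched_prob N k p i) {s. \<sigma> i s = 0} t"
proof -
  let ?miss = "\<lambda>s S. if i \<in> S \<and> \<sigma> i s \<noteq> 0 then 0 else 1::real"
  have slot: "(\<Sum>S\<in>ksets N k. p S * ?miss s S) = (if \<sigma> i s = 0 then 1 else 1 - sched_prob N k p i)" for s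
  proof -
    have "(\<Sum>S\<in>ksets N k. p S * ?miss s S)
        = (\<Sum>S\<in>ksets N k. p S - (if i \<in> S \<and> \<sigma> i s \<noteq> 0 then p S else 0))"
      by (intro sum.cong) auto
    then show ?thesis
      using p finite_ksets unfolding bs_dist_def sched_prob_def
      by (simp add: sum_subtractf sum.inter_filter)
  qed
  obtain n where n: "t = Suc n" using t(1) by (cases t) auto
  have "exp_age N k T p \<sigma> i t = (\<Sum>y\<in>{1..t}. \<Sum>f\<in>PiE {1..T} (\<lambda>_. ksets N k).
          (\<Prod>s\<in>{1..T}. p (f s)) * (\<Prod>s\<in>{y..<t}. ?miss s (f s)))"
    unfolding exp_age_def age_eq_sum_prod[of _ _ _ n, folded n]
    by (simp only: sum_distrib_left) (rule sum.swap)
  also have "\<dots> = (\<Sum>y\<in>{1..t}. \<Prod>s\<in>{y..<t}. \<Sum>S\<in>ksets N k. p S * ?miss s S)"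
    using p t by (intro sum.cong refl sum_PiE_prod_independent) (auto simp: finite_ksets bs_dist_def)
  also have "\<dots> = (\<Sum>y\<in>{1..t}. \<Prod>s\<in>{y..<t}. if \<sigma> i s = 0 then 1 else 1 - sched_prob N k p i)"
    by (simp only: slot)
  also have "\<dots> = mean_age (1 - sched_prob N k p i) {s. \<sigma> i s = 0} t"
    unfolding mean_age_def by (intro sum.cong refl) (simp add: prod.If_cases Diff_eq)
  finally show ?thesis .
qed

lemma avg_age_eq_total_age:
  assumes "bs_dist N k p"
  shows "avg_age N k T p \<sigma> =
    (\<Sum>i<N. total_age (1 - sched_prob N k p i) T {s. \<sigma> i s = 0}) / (real T * real N)"
proof -
  let ?F = "\<lambda>i. mean_age (1 - sched_prob N k p i) {s. \<sigma> i s = 0}"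
  have "avg_age N k T p \<sigma> = (\<Sum>t=1..T. \<Sum>i<N. ?F i t) / (real T * real N)"
    unfolding avg_age_def using exp_age_eq_mean_age[OF assms]
    by (simp add: sum_divide_distrib[symmetric])
  also have "(\<Sum>t=1..T. \<Sum>i<N. ?F i t) = (\<Sum>i<N. \<Sum>t=1..T. ?F i t)"
    by (rule sum.swap)
  finally show ?thesis
    unfolding total_age_def .
qed

section \<open>The age increase caused by a blocked set\<close>

lemma total_age_restrict: "total_age r T B = total_age r T (B \<inter> {1..<T})"
  unfolding total_age_def mean_age_def
  by (intro sum.cong refl arg_cong[where f = "\<lambda>A. r ^ card A"]) auto

lemma mean_age_insert_max:
  assumes "\<forall>b\<in>B. b < x"
  shows "mean_age r (insert x B) t =
    mean_age r B t + (if x < t then (1 - r) * r ^ (t - Suc x) * mean_age r B x else 0)"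
proof -
  have summand: "r ^ card ({y..<t} - insert x B) = r ^ card ({y..<t} - B)
      + (if y \<le> x \<and> x < t then (1 - r) * r ^ (t - Suc x) * r ^ card ({y..<x} - B) else 0)" for y
  proof (cases "y \<le> x \<and> x < t")
    case True
    then obtain e where e: "t = Suc (x + e)"
      using less_iff_Suc_add by auto
    have "{y..<t} - B = ({y..<x} - B) \<union> {x..<t}" "{y..<t} - insert x B = ({y..<x} - B) \<union> {Suc x..<t}"
      using True assms by auto
    moreover have "card (({y..<x} - B) \<union> {x..<t}) = card ({y..<x} - B) + Suc e"
      "card (({y..<x} - B) \<union> {Suc x..<t}) = card ({y..<x} - B) + e"
      using True e by (subst card_Un_disjoint; auto)+
    ultimately show ?thesis
      using True e by (simp add: power_add algebra_simps)
  next
    case False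
    then have "{y..<t} - insert x B = {y..<t} - B" by auto
    with False show ?thesis by (simp only: if_False)
  qed
  have "(\<Sum>y\<in>{1..t}. if y \<le> x \<and> x < t then (1 - r) * r ^ (t - Suc x) * r ^ card ({y..<x} - B) else 0)
      = (if x < t then (1 - r) * r ^ (t - Suc x) * mean_age r B x else 0)"
    unfolding mean_age_def sum_distrib_left
    by (auto simp: sum.If_cases intro!: sum.cong)
  then show ?thesis
    unfolding mean_age_def summand sum.distrib by simp
qed

text \<open>Blocking x adds (1 - r) r ^ (t - x - 1) times the age just before x to every later slot t;
  summing this geometric series over t gives the factor.\<close>

lemma total_age_insert_max:
  assumes "\<forall>b\<in>B. b < x" "x < T"
  shows "total_age r T (insert x B) = total_age r T B + (1 - r ^ (T - x)) * mean_age r B x"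
proof -
  have "(\<Sum>t\<in>{1..T}. if x < t then (1 - r) * r ^ (t - Suc x) else 0)
      = (1 - r) * (\<Sum>t\<in>{Suc x..T}. r ^ (t - Suc x))"
    by (simp add: sum.If_cases sum_distrib_left) (intro sum.cong; auto)
  also have "(\<Sum>t\<in>{Suc x..T}. r ^ (t - Suc x)) = (\<Sum>i<T - x. r ^ i)"
    using assms(2) by (intro sum.reindex_bij_witness[of _ "\<lambda>i. i + Suc x" "\<lambda>t. t - Suc x"]) auto
  finally have geometric: "(\<Sum>t\<in>{1..T}. if x < t then (1 - r) * r ^ (t - Suc x) else 0) = 1 - r ^ (T - x)"
    by (simp add: one_diff_power_eq)
  have "total_age r T (insert x B) = total_age r T B
      + (\<Sum>t\<in>{1..T}. (if x < t then (1 - r) * r ^ (t - Suc x) else 0) * mean_age r B x)"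
    unfolding total_age_def mean_age_insert_max[OF assms(1)] sum.distrib
    by (simp add: if_distrib[of "\<lambda>c. c * mean_age r B x"] cong: if_cong)
  then show ?thesis
    by (simp only: sum_distrib_right[symmetric] geometric)
qed

lemma age_increase_eq_sum:
  assumes "B \<subseteq> {1..<T}"
  shows "age_increase r T B = (\<Sum>x\<in>B. (1 - r ^ (T - x)) * mean_age r (B \<inter> {..<x}) x)"
  using finite_subset[OF assms finite_atLeastLessThan] assms
proof (induction B rule: finite_linorder_max_induct)
  case empty
  then show ?case by (simp add: age_increase_def)
next
  case (insert b A)
  have "A \<inter> {..<b} = A" "b \<notin> A"
    using insert.hyps(2) by auto
  moreover have "insert b A \<inter> {..<x} = A \<inter> {..<x}" if "x \<in> A" for x
    using that insert.hyps(2) by auto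
  moreover have "age_increase r T (insert b A) = age_increase r T A + (1 - r ^ (T - b)) * mean_age r A b"
    using total_age_insert_max[OF insert.hyps(2)] insert.prems unfolding age_increase_def by simp
  ultimately show ?case
    using insert by (simp add: sum.insert_if)
qed

abbreviation rank :: "nat set \<Rightarrow> nat \<Rightarrow> nat" where
  "rank B x \<equiv> card (B \<inter> {..<x})"

lemma bij_betw_lessThan_card:
  assumes "inj_on f A" "f ` A \<subseteq> {..<card A}"
  shows "bij_betw f A {..<card A}"
  using assms by (simp add: bij_betw_def card_subset_eq card_image)

lemma rank_less_rank:
  assumes "finite B" "y \<in> B" "y < x"
  shows "rank B y < rank B x"
proof (rule psubset_card_mono)
  show "finite (B \<inter> {..<x})"
    using assms(1) by simp
  have "y \<in> (B \<inter> {..<x}) - (B \<inter> {..<y})"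
    using assms(2,3) by simp
  then show "B \<inter> {..<y} \<subset> B \<inter> {..<x}"
    using assms(3) by auto
qed

lemma rank_bij_betw:
  assumes "finite B"
  shows "bij_betw (rank B) B {..<card B}"
proof (rule bij_betw_lessThan_card)
  show "inj_on (rank B) B"
    using rank_less_rank[OF assms] by (intro linorder_inj_onI') (metis less_irrefl)
  show "rank B ` B \<subseteq> {..<card B}"
    using assms by (auto intro!: psubset_card_mono)
qed

lemma sum_rank:
  assumes "finite B"
  shows "(\<Sum>x\<in>B. g (rank B x)) = (\<Sum>i<card B. g i)"
  using sum.reindex_bij_betw[OF rank_bij_betw[OF assms]] .

text \<open>The starting points y \<le> x outside B have pairwise distinct exponents, so they contribute
  a geometric sum.\<close>

lemma mean_age_split:
  assumes "B \<subseteq> {1..<x}"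
  shows "mean_age r B x = (\<Sum>c<x - card B. r ^ c) + (\<Sum>y\<in>B. r ^ card ({y..<x} - B))"
proof -
  define U where "U = {1..x} - B"
  define e where "e y = card ({y..<x} - B)" for y
  have finB: "finite B" using assms finite_subset by blast
  have cardU: "card U = x - card B"
    unfolding U_def using assms finB by (subst card_Diff_subset) auto
  have "bij_betw e U {..<card U}"
  proof (rule bij_betw_lessThan_card)
    have "e y' < e y" if "y \<in> U" "y' \<in> U" "y < y'" for y y'
    proof -
      have "y \<in> ({y..<x} - B) - ({y'..<x} - B)"
        using that by (auto simp: U_def)
      then show ?thesis
        unfolding e_def by (intro psubset_card_mono) auto
    qed
    then show "inj_on e U"
      by (intro linorder_inj_onI') (metis less_irrefl)
    show "e ` U \<subseteq> {..<card U}"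
    proof clarify
      fix y assume y: "y \<in> U"
      then have "x \<in> U - ({1..<x} - B)"
        using assms by (auto simp: U_def)
      then have "card ({1..<x} - B) < card U"
        unfolding U_def by (intro psubset_card_mono) auto
      moreover have "e y \<le> card ({1..<x} - B)"
        unfolding e_def using y by (intro card_mono) (auto simp: U_def)
      ultimately show "e y < card U"
        by simp
    qed
  qed
  then have "(\<Sum>y\<in>U. r ^ e y) = (\<Sum>c<x - card B. r ^ c)"
    using sum.reindex_bij_betw cardU by metis
  moreover have "mean_age r B x = (\<Sum>y\<in>U. r ^ e y) + (\<Sum>y\<in>B. r ^ e y)"
    unfolding mean_age_def U_def e_def using assms by (intro sum.subset_diff) auto
  ultimately show ?thesis
    unfolding e_def by simp
qed

text \<open>From here on K stands for 1 / (1 - r); it enters through K * (1 - r) = 1.\<close>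

lemma geometric_sum_eq:
  fixes r K :: real
  assumes "K * (1 - r) = 1"
  shows "(\<Sum>c<n. r ^ c) = K * (1 - r ^ n)"
  using assms by (simp add: one_diff_power_eq mult.assoc[symmetric])

lemma age_increase_le:
  fixes r K :: real
  assumes r: "0 \<le> r" "r \<le> 1" and K: "K * (1 - r) = 1" and B: "B \<subseteq> {1..<T}"
  shows "age_increase r T B \<le>
    (\<Sum>x\<in>B. (1 - r ^ (T - x)) * (K * (1 - r ^ (x - rank B x)) + rank B x))"
  unfolding age_increase_eq_sum[OF B]
proof (rule sum_mono)
  fix x assume "x \<in> B"
  then have sub: "B \<inter> {..<x} \<subseteq> {1..<x}"
    using B by auto
  have "(\<Sum>y\<in>B \<inter> {..<x}. r ^ card ({y..<x} - B \<inter> {..<x})) \<le> (\<Sum>y\<in>B \<inter> {..<x}. 1)"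
    using r by (intro sum_mono power_le_one) auto
  then have "mean_age r (B \<inter> {..<x}) x \<le> K * (1 - r ^ (x - rank B x)) + rank B x"
    unfolding mean_age_split[OF sub] geometric_sum_eq[OF K] by simp
  moreover have "0 \<le> 1 - r ^ (T - x)"
    using r by (simp add: power_le_one)
  ultimately show "(1 - r ^ (T - x)) * mean_age r (B \<inter> {..<x}) x
      \<le> (1 - r ^ (T - x)) * (K * (1 - r ^ (x - rank B x)) + rank B x)"
    by (rule mult_left_mono)
qed

lemma age_increase_interval:
  fixes r K :: real
  assumes K: "K * (1 - r) = 1" and "a + L < T"
  shows "age_increase r T {Suc a..a + L} =
    (\<Sum>i<L. (1 - r ^ (T - Suc a - i)) * (K * (1 - r ^ Suc a) + i))"
proof -
  let ?I = "{Suc a..a + L}"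
  have "?I \<subseteq> {1..<T}"
    using assms(2) by auto
  then have "age_increase r T ?I = (\<Sum>x\<in>?I. (1 - r ^ (T - x)) * mean_age r (?I \<inter> {..<x}) x)"
    by (rule age_increase_eq_sum)
  also have "\<dots> = (\<Sum>x\<in>?I. (1 - r ^ (T - x)) * mean_age r {Suc a..<x} x)"
    by (intro sum.cong refl arg_cong2[where f = "\<lambda>u v. u * mean_age r v x" for x]) auto
  also have "\<dots> = (\<Sum>x\<in>?I. (1 - r ^ (T - x)) * (K * (1 - r ^ Suc a) + (x - Suc a)))"
  proof (rule sum.cong[OF refl])
    fix x assume x: "x \<in> ?I"
    have "(\<Sum>y\<in>{Suc a..<x}. r ^ card ({y..<x} - {Suc a..<x})) = (\<Sum>y\<in>{Suc a..<x}. 1)"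
    proof (rule sum.cong[OF refl])
      fix y assume "y \<in> {Suc a..<x}"
      then have "{y..<x} - {Suc a..<x} = {}" by auto
      then show "r ^ card ({y..<x} - {Suc a..<x}) = 1" by (metis card.empty power_0)
    qed
    moreover have "x - card {Suc a..<x} = Suc a"
      using x by simp
    ultimately have "mean_age r {Suc a..<x} x = K * (1 - r ^ Suc a) + (x - Suc a)"
      using mean_age_split[of "{Suc a..<x}" x r] by (simp del: sum.lessThan_Suc add: geometric_sum_eq[OF K])
    then show "(1 - r ^ (T - x)) * mean_age r {Suc a..<x} x
        = (1 - r ^ (T - x)) * (K * (1 - r ^ Suc a) + (x - Suc a))"
      by simp
  qed
  also have "\<dots> = (\<Sum>i<L. (1 - r ^ (T - Suc a - i)) * (K * (1 - r ^ Suc a) + i))"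
    by (intro sum.reindex_bij_witness[of _ "\<lambda>i. i + Suc a" "\<lambda>x. x - Suc a"]) auto
  finally show ?thesis .
qed

lemma sum_of_nat_lessThan: "(\<Sum>i<n. real i) = real n * (real n - 1) / 2"
  by (induction n) (simp_all add: field_simps)

lemma one_le_geometric_factor:
  fixes r K :: real
  assumes "0 \<le> r" "r \<le> 1" "K * (1 - r) = 1"
  shows "1 \<le> K"
proof -
  have pos: "0 < 1 - r"
    using assms by (cases "r = 1") auto
  then have "K = 1 / (1 - r)"
    using assms(3) by (simp add: field_simps)
  then show ?thesis
    using pos assms(1) by simp
qed

lemma age_increase_le_quadratic:
  fixes r K :: real
  assumes r: "0 \<le> r" "r \<le> 1" and K: "K * (1 - r) = 1" and B: "B \<subseteq> {1..<T}"
  shows "age_increase r T B \<le> K * card B + real (card B) * (real (card B) - 1) / 2"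
proof -
  have K0: "0 \<le> K"
    using one_le_geometric_factor[OF r K] by simp
  have summand_le: "(1 - r ^ (T - x)) * (K * (1 - r ^ n) + j) \<le> K + j" for x n and j :: nat
  proof -
    have "0 \<le> K * r ^ n" "K * r ^ n \<le> K"
      using K0 r by (simp_all add: mult_left_le power_le_one)
    then have "0 \<le> K * (1 - r ^ n)" "K * (1 - r ^ n) \<le> K"
      by (simp_all add: right_diff_distrib)
    moreover have "0 \<le> 1 - r ^ (T - x)" "1 - r ^ (T - x) \<le> 1"
      using r by (simp_all add: power_le_one)
    ultimately have "(1 - r ^ (T - x)) * (K * (1 - r ^ n) + j) \<le> K * (1 - r ^ n) + j"
      by (intro mult_left_le_one_le) auto
    then show ?thesis
      using \<open>K * (1 - r ^ n) \<le> K\<close> by linarith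
  qed
  have "age_increase r T B \<le> (\<Sum>x\<in>B. K + rank B x)"
    using age_increase_le[OF r K B] by (rule order.trans) (intro sum_mono summand_le)
  also have "\<dots> = (\<Sum>i<card B. K + i)"
    using B finite_subset by (intro sum_rank) blast
  finally show ?thesis
    by (simp add: sum.distrib sum_of_nat_lessThan mult.commute)
qed

lemma weighted_geometric_sum:
  fixes r K :: real
  assumes "K * (1 - r) = 1"
  shows "(\<Sum>i<L. (K + i) * r ^ (L - 1 - i)) = K * L"
proof (induction L)
  case 0
  then show ?case by simp
next
  case (Suc L)
  have "(\<Sum>i<L. (K + i) * r ^ (L - i)) = r * (\<Sum>i<L. (K + i) * r ^ (L - 1 - i))"
    unfolding sum_distrib_left by (intro sum.cong refl) (simp add: Suc_diff_Suc flip: power_Suc)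
  then have "(\<Sum>i<Suc L. (K + i) * r ^ (Suc L - 1 - i)) = r * (\<Sum>i<L. (K + i) * r ^ (L - 1 - i)) + (K + L)"
    by simp
  also have "\<dots> = r * (K * L) + (K + L)"
    by (simp only: Suc.IH)
  also have "\<dots> = K * Suc L"
  proof -
    have "K * L - r * (K * L) = K * (1 - r) * L"
      by (simp add: algebra_simps)
    moreover have "K * real (Suc L) = K * L + K"
      by (simp add: algebra_simps)
    ultimately show ?thesis
      using assms by simp
  qed
  finally show ?case .
qed

section \<open>One user carrying the whole budget\<close>

lemma Chebyshev_sum_upper_set:
  fixes a b :: "'i \<Rightarrow> 'a::linordered_idom"
  assumes "\<And>x y. x \<in> A \<Longrightarrow> y \<in> A \<Longrightarrow> (a x - a y) * (b x - b y) \<le> 0"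
  shows "of_nat (card A) * (\<Sum>x\<in>A. a x * b x) \<le> (\<Sum>x\<in>A. a x) * (\<Sum>x\<in>A. b x)"
proof -
  have "2 * (of_nat (card A) * (\<Sum>x\<in>A. a x * b x) - (\<Sum>x\<in>A. a x) * (\<Sum>x\<in>A. b x))
      = (\<Sum>x\<in>A. \<Sum>y\<in>A. (a x - a y) * (b x - b y))"
    by (simp only: one_add_one[symmetric] algebra_simps)
      (simp add: algebra_simps sum_subtractf sum.distrib sum.swap[of "\<lambda>x y. a x * b y"] sum_distrib_left)
  also have "\<dots> \<le> 0"
    using assms by (intro sum_nonpos) auto
  finally show ?thesis
    by simp
qed

lemma power_sum_balanced_le:
  fixes r :: real
  assumes r: "0 \<le> r" "r \<le> 1" and d: "d \<le> 2 * m + 1"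
  shows "r ^ m + r ^ Suc m \<le> r ^ d + r ^ (2 * m + 1 - d)"
proof -
  have balanced: "r ^ m + r ^ Suc m \<le> r ^ d + r ^ (2 * m + 1 - d)" if "d \<le> m" for d
  proof -
    obtain e where e: "m = d + e"
      using \<open>d \<le> m\<close> le_Suc_ex by blast
    have "r ^ d + r ^ (2 * m + 1 - d) - (r ^ m + r ^ Suc m) = r ^ d * (1 - r ^ Suc e) * (1 - r ^ e)"
      unfolding e by (simp add: power_add mult_2 power_mult power2_eq_square algebra_simps)
    also have "\<dots> \<ge> 0"
      using r power_le_one[OF r, of e] power_le_one[OF r, of "Suc e"]
      by (intro mult_nonneg_nonneg) auto
    finally show ?thesis
      by simp
  qed
  show ?thesis
  proof (cases "d \<le> m")
    case False
    then show ?thesis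
      using balanced[of "2 * m + 1 - d"] d by (simp add: add.commute)
  qed (rule balanced)
qed

lemma sum_rank_weight_power_le:
  fixes r K :: real and j d :: "'a \<Rightarrow> nat"
  assumes r: "0 \<le> r" "r \<le> 1" and K: "K * (1 - r) = 1"
    and j: "bij_betw j A {..<L}"
    and mono: "\<And>x y. x \<in> A \<Longrightarrow> y \<in> A \<Longrightarrow> j x \<le> j y \<Longrightarrow> d x \<le> d y"
  shows "(\<Sum>x\<in>A. (K + j x) * r ^ (L - 1 - j x) * r ^ d x) \<le> K * (\<Sum>x\<in>A. r ^ d x)"
proof -
  define \<beta> where "\<beta> i = (K + i) * r ^ (L - 1 - i)" for i :: nat
  have K0: "0 \<le> K"
    using one_le_geometric_factor[OF r K] by simp
  have jL: "j x < L" if "x \<in> A" for x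
    using j that bij_betwE by blast
  have "(\<Sum>x\<in>A. \<beta> (j x)) = (\<Sum>i<L. \<beta> i)"
    by (rule sum.reindex_bij_betw[OF j])
  also have "\<dots> = K * L"
    unfolding \<beta>_def by (rule weighted_geometric_sum[OF K])
  finally have sum_\<beta>: "(\<Sum>x\<in>A. \<beta> (j x)) = K * L" .
  have \<beta>_mono: "\<beta> (j x) \<le> \<beta> (j y)" if "x \<in> A" "y \<in> A" "j x \<le> j y" for x y
    unfolding \<beta>_def using that r K0 jL[OF that(2)] by (intro mult_mono power_decreasing) auto
  have "(\<beta> (j x) - \<beta> (j y)) * (r ^ d x - r ^ d y) \<le> 0" if "x \<in> A" "y \<in> A" for x y
  proof (cases "j x \<le> j y")
    case True
    then show ?thesis
      using that \<beta>_mono mono r by (intro mult_nonpos_nonneg) (auto intro: power_decreasing)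
  next
    case False
    then show ?thesis
      using that \<beta>_mono mono r by (intro mult_nonneg_nonpos) (auto intro: power_decreasing)
  qed
  then have "real L * (\<Sum>x\<in>A. \<beta> (j x) * r ^ d x) \<le> K * L * (\<Sum>x\<in>A. r ^ d x)"
    using Chebyshev_sum_upper_set[of A "\<lambda>x. \<beta> (j x)" "\<lambda>x. r ^ d x"] bij_betw_same_card[OF j] sum_\<beta>
    by simp
  then show ?thesis
    unfolding \<beta>_def by (cases "L = 0") (use j in \<open>auto simp: bij_betw_def mult.assoc\<close>)
qed

text \<open>A blocked slot of rank j preceded by d unblocked slots saves K r ^ d and
  (K + j) r ^ (L - 1 - j) r ^ (2 m + 1 - d) of the increase. The first term favours late slots,
  the second early ones; Chebyshev's inequality and the convexity of d \<mapsto> r ^ d show that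
  d = m + 1 for every rank, the window in the middle, saves least.\<close>

lemma sum_power_tradeoff_ge:
  fixes r K :: real and j d :: "'a \<Rightarrow> nat"
  assumes r: "0 \<le> r" "r \<le> 1" and K: "K * (1 - r) = 1"
    and j: "bij_betw j A {..<L}"
    and mono: "\<And>x y. x \<in> A \<Longrightarrow> y \<in> A \<Longrightarrow> j x \<le> j y \<Longrightarrow> d x \<le> d y"
    and d: "\<And>x. x \<in> A \<Longrightarrow> d x \<le> 2 * m + 1"
  shows "K * L * (r ^ m + r ^ Suc m) \<le>
    (\<Sum>x\<in>A. K * r ^ d x + (K + j x) * r ^ (L - 1 - j x) * r ^ (2 * m + 1 - d x))"
proof -
  define \<beta> where "\<beta> i = (K + i) * r ^ (L - 1 - i)" for i :: nat
  have "(\<Sum>x\<in>A. \<beta> (j x)) = (\<Sum>i<L. \<beta> i)"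
    by (rule sum.reindex_bij_betw[OF j])
  also have "\<dots> = K * L"
    unfolding \<beta>_def by (rule weighted_geometric_sum[OF K])
  finally have "K * L * (r ^ m + r ^ Suc m)
      \<le> K * (\<Sum>x\<in>A. r ^ d x) - (\<Sum>x\<in>A. \<beta> (j x) * r ^ d x) + (r ^ m + r ^ Suc m) * (\<Sum>x\<in>A. \<beta> (j x))"
    using sum_rank_weight_power_le[OF r K j mono] unfolding \<beta>_def by simp
  also have "\<dots> = (\<Sum>x\<in>A. K * r ^ d x + \<beta> (j x) * (r ^ m + r ^ Suc m - r ^ d x))"
    by (simp add: sum.distrib sum_subtractf sum_distrib_left algebra_simps)
  also have "\<dots> \<le> (\<Sum>x\<in>A. K * r ^ d x + \<beta> (j x) * r ^ (2 * m + 1 - d x))"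
  proof (intro sum_mono add_left_mono mult_left_mono)
    fix x assume "x \<in> A"
    show "r ^ m + r ^ Suc m - r ^ d x \<le> r ^ (2 * m + 1 - d x)"
      using power_sum_balanced_le[OF r d[OF \<open>x \<in> A\<close>]] by linarith
    show "0 \<le> \<beta> (j x)"
      unfolding \<beta>_def using one_le_geometric_factor[OF r K] r by simp
  qed
  finally show ?thesis
    unfolding \<beta>_def by (simp add: mult.assoc)
qed

lemma age_increase_window_eq:
  fixes r K :: real
  assumes K: "K * (1 - r) = 1" and m: "1 \<le> m"
  shows "age_increase r (2 * m + L) {Suc m..m + L} =
    (\<Sum>i<L. K + i + K * r ^ (2 * m + L - i)) - K * L * (r ^ m + r ^ Suc m)"
proof -
  have "age_increase r (2 * m + L) {Suc m..m + L}
      = (\<Sum>i<L. (1 - r ^ (2 * m + L - Suc m - i)) * (K * (1 - r ^ Suc m) + i))"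
    using m by (intro age_increase_interval[OF K]) simp
  also have "\<dots> = (\<Sum>i<L. (K + i + K * r ^ (2 * m + L - i))
      - (K * r ^ Suc m + r ^ m * ((K + i) * r ^ (L - 1 - i))))"
  proof (rule sum.cong[OF refl])
    fix i assume "i \<in> {..<L}"
    then have e: "2 * m + L - Suc m - i = m + (L - 1 - i)" "2 * m + L - i = Suc m + (m + (L - 1 - i))"
      by auto
    show "(1 - r ^ (2 * m + L - Suc m - i)) * (K * (1 - r ^ Suc m) + i)
        = (K + i + K * r ^ (2 * m + L - i)) - (K * r ^ Suc m + r ^ m * ((K + i) * r ^ (L - 1 - i)))"
      unfolding e by (simp add: power_add algebra_simps)
  qed
  also have "\<dots> = (\<Sum>i<L. K + i + K * r ^ (2 * m + L - i))
      - (L * (K * r ^ Suc m) + r ^ m * (\<Sum>i<L. (K + i) * r ^ (L - 1 - i)))"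
    by (simp only: sum_subtractf sum.distrib sum_distrib_left[symmetric] sum_constant card_lessThan mult_ac)
  finally show ?thesis
    by (simp only: weighted_geometric_sum[OF K]) (simp add: algebra_simps)
qed

lemma ranked_increase_sum_le:
  fixes r K :: real and j d :: "'a \<Rightarrow> nat"
  assumes r: "0 \<le> r" "r \<le> 1" and K: "K * (1 - r) = 1"
    and j: "bij_betw j A {..<L}"
    and mono: "\<And>x y. x \<in> A \<Longrightarrow> y \<in> A \<Longrightarrow> j x \<le> j y \<Longrightarrow> d x \<le> d y"
    and d: "\<And>x. x \<in> A \<Longrightarrow> d x \<le> 2 * m + 1"
  shows "(\<Sum>x\<in>A. (1 - r ^ (2 * m + L - d x - j x)) * (K * (1 - r ^ d x) + j x))
    \<le> (\<Sum>i<L. K + i + K * r ^ (2 * m + L - i)) - K * L * (r ^ m + r ^ Suc m)"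
proof -
  let ?common = "\<lambda>i::nat. K + i + K * r ^ (2 * m + L - i)"
  have "(\<Sum>x\<in>A. (1 - r ^ (2 * m + L - d x - j x)) * (K * (1 - r ^ d x) + j x))
      = (\<Sum>x\<in>A. ?common (j x)) - (\<Sum>x\<in>A. K * r ^ d x + (K + j x) * r ^ (L - 1 - j x) * r ^ (2 * m + 1 - d x))"
    unfolding sum_subtractf[symmetric]
  proof (rule sum.cong[OF refl])
    fix x assume x: "x \<in> A"
    have "j x < L"
      using j x bij_betwE by blast
    then have e: "2 * m + L - d x - j x = (L - 1 - j x) + (2 * m + 1 - d x)"
      "2 * m + L - j x = d x + ((L - 1 - j x) + (2 * m + 1 - d x))"
      using d[OF x] by linarith+
    show "(1 - r ^ (2 * m + L - d x - j x)) * (K * (1 - r ^ d x) + j x)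
        = ?common (j x) - (K * r ^ d x + (K + j x) * r ^ (L - 1 - j x) * r ^ (2 * m + 1 - d x))"
      unfolding e by (simp add: power_add algebra_simps)
  qed
  also have "(\<Sum>x\<in>A. ?common (j x)) = (\<Sum>i<L. ?common i)"
    by (rule sum.reindex_bij_betw[OF j])
  finally have "(\<Sum>x\<in>A. (1 - r ^ (2 * m + L - d x - j x)) * (K * (1 - r ^ d x) + j x))
      = (\<Sum>i<L. ?common i) - (\<Sum>x\<in>A. K * r ^ d x + (K + j x) * r ^ (L - 1 - j x) * r ^ (2 * m + 1 - d x))" .
  moreover have "K * L * (r ^ m + r ^ Suc m)
      \<le> (\<Sum>x\<in>A. K * r ^ d x + (K + j x) * r ^ (L - 1 - j x) * r ^ (2 * m + 1 - d x))"
    by (rule sum_power_tradeoff_ge[OF r K j]) (fact mono, fact d)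
  ultimately show ?thesis
    by linarith
qed

lemma diff_rank_mono:
  assumes "x \<le> y"
  shows "x - rank B x \<le> y - rank B y"
proof -
  have "card ({..<x} - B) \<le> card ({..<y} - B)"
    using assms by (intro card_mono) auto
  then show ?thesis
    by (simp add: card_Diff_subset_Int Int_commute)
qed

lemma age_increase_le_window:
  fixes r K :: real
  assumes r: "0 \<le> r" "r \<le> 1" and K: "K * (1 - r) = 1"
    and m: "1 \<le> m" and B: "B \<subseteq> {1..<2 * m + L}" "card B = L"
  shows "age_increase r (2 * m + L) B \<le> age_increase r (2 * m + L) {Suc m..m + L}"
proof -
  define d where "d x = x - rank B x" for x
  have finB: "finite B"
    using B(1) finite_subset by blast
  have j: "bij_betw (rank B) B {..<L}"
    using rank_bij_betw[OF finB] B(2) by simp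
  have d_le: "d x \<le> 2 * m + 1" if "x \<in> B" for x
  proof -
    have "rank B (2 * m + L) = L"
      using B by (simp add: Int_absorb2 subset_iff)
    moreover have "d x \<le> d (2 * m + L)"
      unfolding d_def using that B(1) by (intro diff_rank_mono) auto
    ultimately show ?thesis
      by (simp add: d_def)
  qed
  have "age_increase r (2 * m + L) B
      \<le> (\<Sum>x\<in>B. (1 - r ^ (2 * m + L - x)) * (K * (1 - r ^ d x) + rank B x))"
    unfolding d_def by (rule age_increase_le[OF r K B(1)])
  also have "\<dots> = (\<Sum>x\<in>B. (1 - r ^ (2 * m + L - d x - rank B x)) * (K * (1 - r ^ d x) + rank B x))"
    using card_mono[of "{..<x}" "B \<inter> {..<x}" for x] by (intro sum.cong refl) (simp add: d_def)
  also have "\<dots> \<le> (\<Sum>i<L. K + i + K * r ^ (2 * m + L - i)) - K * L * (r ^ m + r ^ Suc m)"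
  proof (rule ranked_increase_sum_le[OF r K j])
    fix x y assume "x \<in> B" "y \<in> B" "rank B x \<le> rank B y"
    then have "x \<le> y"
      using rank_less_rank[OF finB, of y x] by linarith
    then show "d x \<le> d y"
      unfolding d_def by (rule diff_rank_mono)
  qed (rule d_le)
  also have "\<dots> = age_increase r (2 * m + L) {Suc m..m + L}"
    by (rule age_increase_window_eq[OF K m, symmetric])
  finally show ?thesis .
qed

lemma age_increase_window_ge:
  fixes r K :: real
  assumes r: "0 \<le> r" "r \<le> 1" and K: "K * (1 - r) = 1" and m: "1 \<le> m"
  shows "K * L + real L * (real L - 1) / 2 - 2 * K * L * r ^ m \<le> age_increase r (2 * m + L) {Suc m..m + L}"
proof -
  have K0: "0 \<le> K"
    using one_le_geometric_factor[OF r K] by simp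
  have "0 \<le> (\<Sum>i<L. K * r ^ (2 * m + L - i))"
    using K0 r by (intro sum_nonneg) simp
  moreover have "K * L * r ^ Suc m \<le> K * L * r ^ m"
    using r K0 by (intro mult_left_mono power_decreasing) auto
  ultimately show ?thesis
    unfolding age_increase_window_eq[OF K m]
    by (simp add: sum.distrib sum_of_nat_lessThan algebra_simps)
qed

section \<open>Budgets spread over several users\<close>

lemma sum_age_increase_le_spread:
  fixes r K :: real and Bs :: "'i \<Rightarrow> nat set"
  assumes r: "0 \<le> r" "r \<le> 1" and K: "K * (1 - r) = 1" and L: "1 \<le> L"
    and Bs: "\<And>i. i \<in> I \<Longrightarrow> Bs i \<subseteq> {1..<T}" "\<And>i. i \<in> I \<Longrightarrow> card (Bs i) < L"
    and budget: "(\<Sum>i\<in>I. card (Bs i)) \<le> L"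
  shows "(\<Sum>i\<in>I. age_increase r T (Bs i)) \<le> K * L + real L * (real L - 1) / 2 - L / 2"
proof -
  let ?c = "K + (real L - 2) / 2"
  have "age_increase r T (Bs i) \<le> card (Bs i) * ?c" if "i \<in> I" for i
  proof -
    have "real (card (Bs i)) - 1 \<le> real L - 2"
      using Bs(2)[OF that] by linarith
    then have "real (card (Bs i)) * (real (card (Bs i)) - 1) / 2 \<le> real (card (Bs i)) * (real L - 2) / 2"
      by (intro divide_right_mono mult_left_mono) auto
    moreover have "real (card (Bs i)) * ?c = K * card (Bs i) + real (card (Bs i)) * (real L - 2) / 2"
      by (simp add: algebra_simps)
    ultimately show ?thesis
      using age_increase_le_quadratic[OF r K Bs(1)[OF that]] by simp
  qed
  then have "(\<Sum>i\<in>I. age_increase r T (Bs i)) \<le> (\<Sum>i\<in>I. card (Bs i)) * ?c"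
    unfolding of_nat_sum sum_distrib_right by (rule sum_mono)
  also have "\<dots> \<le> L * ?c"
  proof (rule mult_right_mono)
    show "real (\<Sum>i\<in>I. card (Bs i)) \<le> real L"
      using budget by (simp only: of_nat_le_iff)
    show "0 \<le> ?c"
      using one_le_geometric_factor[OF r K] L by (simp add: field_simps)
  qed
  also have "\<dots> = K * L + real L * (real L - 1) / 2 - L / 2"
    by (simp add: field_simps algebra_simps)
  finally show ?thesis .
qed

text \<open>Either one user carries the whole budget, and the window is optimal among such blockings,
  or the budget is spread and the quadratic term loses L / 2 against the window, which is more
  than the window's own loss 2 K L r ^ m once r ^ m is small.\<close>

lemma sum_age_increase_le_window:
  fixes r :: real and Bs :: "'i \<Rightarrow> nat set"
  assumes r: "0 \<le> r" "r < 1" and small: "4 * r ^ m \<le> 1 - r" and m: "1 \<le> m" and L: "1 \<le> L"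
    and I: "finite I" and Bs: "\<And>i. i \<in> I \<Longrightarrow> Bs i \<subseteq> {1..<2 * m + L}"
    and budget: "(\<Sum>i\<in>I. card (Bs i)) \<le> L"
  shows "(\<Sum>i\<in>I. age_increase r (2 * m + L) (Bs i)) \<le> age_increase r (2 * m + L) {Suc m..m + L}"
proof -
  define K where "K = 1 / (1 - r)"
  have K: "K * (1 - r) = 1"
    using r by (simp add: K_def)
  show ?thesis
  proof (cases "\<exists>i0\<in>I. card (Bs i0) = L")
    case True
    then obtain i0 where i0: "i0 \<in> I" "card (Bs i0) = L" by blast
    have "(\<Sum>i\<in>I - {i0}. card (Bs i)) = 0"
      using budget i0 I by (simp add: sum.remove)
    then have "Bs i = {}" if "i \<in> I - {i0}" for i
      using that I Bs finite_subset[OF Bs finite_atLeastLessThan] by (simp add: sum_eq_0_iff)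
    then have "(\<Sum>i\<in>I. age_increase r (2 * m + L) (Bs i)) = age_increase r (2 * m + L) (Bs i0)"
      using i0 I by (simp add: sum.remove age_increase_def)
    also have "\<dots> \<le> age_increase r (2 * m + L) {Suc m..m + L}"
      using age_increase_le_window[OF r(1) _ K m Bs[OF i0(1)] i0(2)] r by simp
    finally show ?thesis .
  next
    case False
    have "card (Bs i) < L" if "i \<in> I" for i
      using member_le_sum[of i I "\<lambda>i. card (Bs i)"] that I budget False by fastforce
    then have "(\<Sum>i\<in>I. age_increase r (2 * m + L) (Bs i)) \<le> K * L + real L * (real L - 1) / 2 - L / 2"
      by (intro sum_age_increase_le_spread[OF r(1) _ K L Bs]) (use r budget in auto)
    also have "\<dots> \<le> K * L + real L * (real L - 1) / 2 - 2 * K * L * r ^ m"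
    proof -
      have K0: "0 \<le> K"
        using r by (simp add: K_def)
      then have "K * (4 * r ^ m) \<le> K * (1 - r)"
        by (rule mult_left_mono[OF small])
      then have "4 * K * r ^ m * L \<le> L"
        using K K0 r by (intro mult_left_le_one_le) (simp_all add: mult.assoc)
      then show ?thesis
        by (simp add: algebra_simps)
    qed
    also have "\<dots> \<le> age_increase r (2 * m + L) {Suc m..m + L}"
      using age_increase_window_ge[OF r(1) _ K m] r by simp
    finally show ?thesis .
  qed
qed

section \<open>Other distributions of the leader\<close>

lemma power_ge_tangent:
  fixes x y :: real
  assumes "0 \<le> x" "0 \<le> y"
  shows "y ^ n + n * y ^ (n - 1) * (x - y) \<le> x ^ n"
proof (cases "y = 0")
  case True
  then show ?thesis
    using assms by (cases n) (auto simp: power_0_left)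
next
  case False
  then have y: "0 < y"
    using assms by simp
  define h where "h = (x - y) / y"
  have "y ^ n * (1 + n * h) \<le> y ^ n * (1 + h) ^ n"
    using Bernoulli_inequality[of h n] assms y by (intro mult_left_mono) (auto simp: h_def field_simps)
  also have "\<dots> = x ^ n"
    using y by (simp add: h_def field_simps flip: power_mult_distrib)
  also have "y ^ n * (1 + n * h) = y ^ n + n * y ^ (n - 1) * (x - y)"
    using y by (cases n) (simp_all add: h_def field_simps)
  finally show ?thesis .
qed

lemma card_mult_power_le_sum_power:
  fixes x :: "'i \<Rightarrow> real" and y :: real
  assumes "\<And>i. i \<in> I \<Longrightarrow> 0 \<le> x i" "0 \<le> y" "(\<Sum>i\<in>I. x i) = card I * y"
  shows "card I * y ^ n \<le> (\<Sum>i\<in>I. x i ^ n)"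
proof -
  have "(\<Sum>i\<in>I. y ^ n + n * y ^ (n - 1) * (x i - y)) \<le> (\<Sum>i\<in>I. x i ^ n)"
    using assms power_ge_tangent by (intro sum_mono) auto
  moreover have "(\<Sum>i\<in>I. y ^ n + n * y ^ (n - 1) * (x i - y))
      = card I * y ^ n + n * y ^ (n - 1) * ((\<Sum>i\<in>I. x i) - card I * y)"
    by (simp only: sum.distrib sum_constant sum_distrib_left[symmetric] sum_subtractf)
  ultimately show ?thesis
    using assms(3) by simp
qed

lemma card_mult_total_age_le_sum:
  fixes x :: "'i \<Rightarrow> real" and y :: real
  assumes "\<And>i. i \<in> I \<Longrightarrow> 0 \<le> x i" "0 \<le> y" "(\<Sum>i\<in>I. x i) = card I * y"
  shows "card I * total_age y T B \<le> (\<Sum>i\<in>I. total_age (x i) T B)"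
proof -
  have "card I * total_age y T B = (\<Sum>t\<in>{1..T}. \<Sum>s\<in>{1..t}. card I * y ^ card ({s..<t} - B))"
    unfolding total_age_def mean_age_def by (simp add: sum_distrib_left)
  also have "\<dots> \<le> (\<Sum>t\<in>{1..T}. \<Sum>s\<in>{1..t}. \<Sum>i\<in>I. x i ^ card ({s..<t} - B))"
    using card_mult_power_le_sum_power[OF assms] by (intro sum_mono) auto
  also have "\<dots> = (\<Sum>i\<in>I. total_age (x i) T B)"
    unfolding total_age_def mean_age_def by (simp add: sum.swap[of _ I])
  finally show ?thesis .
qed

definition window_block :: "nat \<Rightarrow> nat \<Rightarrow> nat \<Rightarrow> nat \<Rightarrow> nat \<Rightarrow> nat" where
  "window_block m L j = (\<lambda>i t. if i = j \<and> Suc m \<le> t \<and> t \<le> m + L then 0 else 1)"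

lemma window_block_blocked: "{t. window_block m L j i t = 0} = (if i = j then {Suc m..m + L} else {})"
  unfolding window_block_def by auto

lemma feasible_window_block:
  assumes "m + L \<le> T" "real L \<le> \<alpha> * real T" "1 \<le> ka" "j < N"
  shows "feasible N T ka \<alpha> (window_block m L j)"
  unfolding feasible_def
proof (intro conjI ballI allI impI)
  show "window_block m L j i t \<in> {0, 1}" for i t
    unfolding window_block_def by simp
  have "(\<Sum>t=1..T. 1 - window_block m L j i t) = (if i = j then L else 0)" for i
  proof -
    have "(\<Sum>t=1..T. 1 - window_block m L j i t) = (\<Sum>t\<in>{t\<in>{1..T}. i = j \<and> t \<in> {Suc m..m + L}}. 1)"
      unfolding window_block_def sum.inter_filter[OF finite_atLeastAtMost] by (intro sum.cong) auto
    also have "{t\<in>{1..T}. i = j \<and> t \<in> {Suc m..m + L}} = (if i = j then {Suc m..m + L} else {})"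
      using assms(1) by auto
    finally show ?thesis
      by simp
  qed
  then show "real (\<Sum>i<N. \<Sum>t=1..T. 1 - window_block m L j i t) \<le> \<alpha> * real T"
    using assms(2,4) by simp
  show "(\<Sum>i<N. 1 - window_block m L j i t) \<le> ka" for t
  proof -
    have "(\<Sum>i<N. 1 - window_block m L j i t) \<le> (\<Sum>i<N. if i = j then 1 else 0)"
      by (intro sum_mono) (simp add: window_block_def)
    then show ?thesis
      using assms(3,4) by simp
  qed
qed

lemma sum_total_age_single_block:
  assumes "finite I" "j \<in> I"
  shows "(\<Sum>i\<in>I. total_age (x i) T (if i = j then B else {}))
    = (\<Sum>i\<in>I. total_age (x i) T {}) + age_increase (x j) T B"
proof -
  have "(\<Sum>i\<in>I. total_age (x i) T (if i = j then B else {}))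
      = (\<Sum>i\<in>I. total_age (x i) T {} + (if i = j then age_increase (x j) T B else 0))"
    unfolding age_increase_def by (intro sum.cong) auto
  then show ?thesis
    using assms by (simp add: sum.distrib)
qed

lemma blocked_budget_le:
  assumes "feasible N T ka \<alpha> \<sigma>"
  shows "real (\<Sum>i<N. card ({s. \<sigma> i s = 0} \<inter> {1..<T})) \<le> \<alpha> * T"
proof -
  have "card ({s. \<sigma> i s = 0} \<inter> {1..<T}) = (\<Sum>t\<in>{s. \<sigma> i s = 0} \<inter> {1..<T}. 1 - \<sigma> i t)" for i
    by simp
  also have "\<dots> i \<le> (\<Sum>t=1..T. 1 - \<sigma> i t)" for i
    by (intro sum_mono2) auto
  finally have "(\<Sum>i<N. card ({s. \<sigma> i s = 0} \<inter> {1..<T})) \<le> (\<Sum>i<N. \<Sum>t=1..T. 1 - \<sigma> i t)"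
    by (intro sum_mono)
  then show ?thesis
    using assms unfolding feasible_def by (meson of_nat_le_iff order.trans)
qed

lemma avg_age_le_window_block:
  assumes kN: "1 \<le> k" "k \<le> N" and p: "bs_dist N k p"
    and uniform: "\<And>i. i < N \<Longrightarrow> sched_prob N k p i = k / N"
    and T: "T = 2 * m + L" "1 \<le> m" "1 \<le> L" and L: "\<alpha> * T = L"
    and small: "4 * (1 - k / N) ^ m \<le> k / N" and j: "j < N"
    and \<sigma>: "feasible N T ka \<alpha> \<sigma>"
  shows "avg_age N k T p \<sigma> \<le> avg_age N k T p (window_block m L j)"
proof -
  define r where "r = 1 - real k / real N"
  have r: "0 \<le> r" "r < 1"
    using kN by (auto simp: r_def field_simps)
  define Bs where "Bs i = {s. \<sigma> i s = 0} \<inter> {1..<T}" for i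
  have "total_age (1 - sched_prob N k p i) T {s. \<sigma> i s = 0} = total_age r T {} + age_increase r T (Bs i)"
    if "i < N" for i
    using total_age_restrict[of r T "{s. \<sigma> i s = 0}"] uniform[OF that]
    unfolding age_increase_def Bs_def r_def by simp
  then have "(\<Sum>i<N. total_age (1 - sched_prob N k p i) T {s. \<sigma> i s = 0})
      = (\<Sum>i<N. total_age r T {}) + (\<Sum>i<N. age_increase r T (Bs i))"
    by (simp add: sum.distrib)
  also have "\<dots> \<le> (\<Sum>i<N. total_age r T {}) + age_increase r T {Suc m..m + L}"
  proof -
    have "(\<Sum>i<N. card (Bs i)) \<le> L"
      using blocked_budget_le[OF \<sigma>] unfolding Bs_def L of_nat_le_iff .
    then show ?thesis
      using sum_age_increase_le_window[OF r _ T(2,3), of "{..<N}" Bs] small T(1)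
      by (simp add: r_def Bs_def)
  qed
  also have "\<dots> = (\<Sum>i<N. total_age (1 - sched_prob N k p i) T {s. window_block m L j i s = 0})"
    using sum_total_age_single_block[of "{..<N}" j "\<lambda>_. r"] j
    by (simp add: uniform r_def window_block_blocked)
  finally show ?thesis
    unfolding avg_age_eq_total_age[OF p] by (intro divide_right_mono) auto
qed

lemma exists_window_block_avg_age_ge:
  assumes kN: "1 \<le> k" "k \<le> N" and p: "bs_dist N k p"
    and uniform: "\<And>i. i < N \<Longrightarrow> sched_prob N k p i = k / N"
    and p': "bs_dist N k p'" and j: "j < N"
  shows "\<exists>j'<N. avg_age N k T p (window_block m L j) \<le> avg_age N k T p' (window_block m L j')"
proof -
  define r where "r = 1 - real k / real N"
  define x where "x i = 1 - sched_prob N k p' i" for i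
  define W where "W = {Suc m..m + L}"
  define S where "S j' = (\<Sum>i<N. total_age (x i) T (if i = j' then W else {}))" for j'
  define c where "c = real N * total_age r T {} + age_increase r T W"
  have r0: "0 \<le> r"
    using kN by (simp add: r_def)
  have x0: "0 \<le> x i" for i
    unfolding x_def using sched_prob_bounds[OF p'] by simp
  have x_sum: "(\<Sum>i<N. x i) = card {..<N} * r"
    using kN sum_sched_prob[OF p'] by (simp add: x_def r_def sum_subtractf field_simps)
  have "(\<Sum>j'<N. S j') = (\<Sum>j'<N. (\<Sum>i<N. total_age (x i) T {}) + age_increase (x j') T W)"
    unfolding S_def using sum_total_age_single_block[of "{..<N}" _ x T W] by (intro sum.cong) auto
  also have "\<dots> = (real N - 1) * (\<Sum>i<N. total_age (x i) T {}) + (\<Sum>i<N. total_age (x i) T W)"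
    by (simp add: age_increase_def sum.distrib sum_subtractf algebra_simps)
  also have "\<dots> \<ge> (real N - 1) * (card {..<N} * total_age r T {}) + card {..<N} * total_age r T W"
    using card_mult_total_age_le_sum[OF x0 r0 x_sum] kN by (intro add_mono mult_left_mono) auto
  finally have "real N * c \<le> (\<Sum>j'<N. S j')"
    by (simp add: c_def age_increase_def algebra_simps)
  then obtain j' where j': "j' < N" "c \<le> S j'"
    using sum_strict_mono[of "{..<N}" S "\<lambda>_. c"] j by (force simp: not_le)
  have "avg_age N k T p (window_block m L j) = c / (real T * real N)"
    using sum_total_age_single_block[of "{..<N}" j "\<lambda>_. r"] j
    by (simp add: avg_age_eq_total_age[OF p] window_block_blocked uniform r_def c_def W_def)
  also have "\<dots> \<le> S j' / (real T * real N)"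
    using j'(2) by (intro divide_right_mono) auto
  also have "\<dots> = avg_age N k T p' (window_block m L j')"
    unfolding S_def x_def W_def by (simp add: avg_age_eq_total_age[OF p'] window_block_blocked)
  finally show ?thesis
    using j'(1) by blast
qed

lemma stackelberg_window_block:
  assumes kN: "1 \<le> k" "k \<le> N" and ka: "1 \<le> ka" and p: "bs_dist N k p"
    and uniform: "\<And>i. i < N \<Longrightarrow> sched_prob N k p i = k / N" and j: "j < N"
    and T: "T = 2 * m + L" "1 \<le> m" "1 \<le> L" and L: "\<alpha> * T = L"
    and small: "4 * (1 - k / N) ^ m \<le> k / N"
  shows "feasible N T ka \<alpha> (window_block m L j) \<and>
    (\<forall>\<sigma>. feasible N T ka \<alpha> \<sigma> \<longrightarrow> avg_age N k T p \<sigma> \<le> avg_age N k T p (window_block m L j)) \<and>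
    (\<forall>p'. bs_dist N k p' \<longrightarrow> (\<forall>\<sigma>. feasible N T ka \<alpha> \<sigma> \<longrightarrow>
       (\<exists>\<sigma>'. feasible N T ka \<alpha> \<sigma>' \<and> avg_age N k T p \<sigma> \<le> avg_age N k T p' \<sigma>')))"
proof (intro conjI allI impI)
  have feasible: "feasible N T ka \<alpha> (window_block m L j')" if "j' < N" for j'
    using T L ka that by (intro feasible_window_block) auto
  then show "feasible N T ka \<alpha> (window_block m L j)"
    using j .
  have best_response: "avg_age N k T p \<sigma> \<le> avg_age N k T p (window_block m L j)"
    if "feasible N T ka \<alpha> \<sigma>" for \<sigma>
    using avg_age_le_window_block[OF kN p uniform T L small j that] .
  then show "avg_age N k T p \<sigma> \<le> avg_age N k T p (window_block m L j)"
    if "feasible N T ka \<alpha> \<sigma>" for \<sigma>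
    using that by blast
  fix p' \<sigma> assume "bs_dist N k p'" "feasible N T ka \<alpha> \<sigma>"
  then obtain j' where "j' < N" "avg_age N k T p (window_block m L j) \<le> avg_age N k T p' (window_block m L j')"
    using exists_window_block_avg_age_ge[OF kN p uniform _ j] by blast
  then show "\<exists>\<sigma>'. feasible N T ka \<alpha> \<sigma>' \<and> avg_age N k T p \<sigma> \<le> avg_age N k T p' \<sigma>'"
    using feasible best_response[OF \<open>feasible N T ka \<alpha> \<sigma>\<close>] by (blast intro: order.trans)
qed

lemma power_eventually_le:
  fixes x c :: real
  assumes "0 \<le> x" "x < 1" "0 < c"
  obtains M where "\<And>m. M \<le> m \<Longrightarrow> x ^ m \<le> c"
proof -
  obtain M where M: "x ^ M < c"
    using real_arch_pow_inv assms(2,3) by blast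
  show ?thesis
  proof (rule that)
    fix m assume "M \<le> m"
    then have "x ^ m \<le> x ^ M"
      using assms(1,2) by (intro power_decreasing) auto
    with M show "x ^ m \<le> c"
      by simp
  qed
qed

lemma window_parameters:
  fixes \<alpha> :: real
  assumes \<alpha>: "0 < \<alpha>" "\<alpha> < 1" and T: "2 * (real M + 1) / (1 - \<alpha>) \<le> real T"
    and a: "\<alpha> * real T = real_of_int a" and m: "(1 - \<alpha>) * real T = 2 * real m"
  obtains L where "T = 2 * m + L" "M < m" "1 \<le> L" "\<alpha> * real T = real L"
    "\<And>j. (\<lambda>i t. if i = j \<and> (1 - \<alpha>) * real T / 2 + 1 \<le> real t \<and> real t \<le> (1 + \<alpha>) * real T / 2
        then 0 else 1) = window_block m L j"
proof
  have "2 * (real M + 1) \<le> (1 - \<alpha>) * real T"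
    using T \<alpha> by (simp add: field_simps)
  then show "M < m"
    using m by simp
  have "0 < 2 * (real M + 1) / (1 - \<alpha>)"
    using \<alpha> by simp
  then have "0 < \<alpha> * real T"
    using T \<alpha> by (intro mult_pos_pos) linarith+
  then have "0 < a"
    using a by simp
  then show "1 \<le> nat a" and L: "\<alpha> * real T = real (nat a)"
    using a by simp_all
  have "real T = real (2 * m + nat a)"
    using L m by (simp add: algebra_simps)
  then show "T = 2 * m + nat a"
    by (simp only: of_nat_eq_iff)
  have "(1 - \<alpha>) * real T / 2 + 1 = real (Suc m)" "(1 + \<alpha>) * real T / 2 = real (m + nat a)"
    using L m by (simp_all add: algebra_simps)
  then show "(\<lambda>i t. if i = j \<and> (1 - \<alpha>) * real T / 2 + 1 \<le> real t \<and> real t \<le> (1 + \<alpha>) * real T / 2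
      then 0 else 1) = window_block m (nat a) j" for j
    unfolding window_block_def by (simp only: of_nat_le_iff)
qed

theorem theorem17:
  fixes N k ka :: nat and \<alpha> :: real
  assumes "N \<ge> 2" and "1 \<le> k" and "k \<le> N" and "ka \<ge> 1"
    and "0 < \<alpha>" and "\<alpha> < 1"
  shows "\<exists>T0. \<forall>T \<ge> T0. (\<exists>a::int. \<alpha> * real T = real_of_int a) \<longrightarrow>
            (\<exists>m::nat. (1 - \<alpha>) * real T = 2 * real m) \<longrightarrow>
          (\<forall>p j. bs_dist N k p \<longrightarrow>
             (\<forall>i<N. (\<Sum>S\<in>{S\<in>ksets N k. i \<in> S}. p S) = real k / real N) \<longrightarrow>
             j < N \<longrightarrow>
             (let \<sigma>s = (\<lambda>i t. if i = j \<and> (1 - \<alpha>) * real T / 2 + 1 \<le> real t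
                                     \<and> real t \<le> (1 + \<alpha>) * real T / 2 then 0 else 1)
              in feasible N T ka \<alpha> \<sigma>s \<and>
                 (\<forall>\<sigma>. feasible N T ka \<alpha> \<sigma> \<longrightarrow> avg_age N k T p \<sigma> \<le> avg_age N k T p \<sigma>s) \<and>
                 (\<forall>p'. bs_dist N k p' \<longrightarrow>
                    (\<forall>\<sigma>. feasible N T ka \<alpha> \<sigma> \<longrightarrow>
                       (\<exists>\<sigma>'. feasible N T ka \<alpha> \<sigma>' \<and> avg_age N k T p \<sigma> \<le> avg_age N k T p' \<sigma>')))))"
proof -
  obtain M where M: "\<And>m. M \<le> m \<Longrightarrow> (1 - real k / real N) ^ m \<le> real k / real N / 4"
    using power_eventually_le[of "1 - real k / real N" "real k / real N / 4"] assms(2,3) by auto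
  have small: "4 * (1 - real k / real N) ^ m \<le> real k / real N" if "M < m" for m
    using M[of m] that by simp
  show ?thesis
    apply (intro exI[of _ "nat \<lceil>2 * (real M + 1) / (1 - \<alpha>)\<rceil>"] allI impI)
    subgoal premises prems for T p j
    proof -
      obtain a m where "\<alpha> * real T = real_of_int a" "(1 - \<alpha>) * real T = 2 * real m"
        using prems(2,3) by blast
      moreover have "2 * (real M + 1) / (1 - \<alpha>) \<le> real T"
        using prems(1) real_nat_ceiling_ge order.trans of_nat_le_iff by blast
      ultimately obtain L where "T = 2 * m + L" "M < m" "1 \<le> L" "\<alpha> * real T = real L"
        and window: "\<And>j. (\<lambda>i t. if i = j \<and> (1 - \<alpha>) * real T / 2 + 1 \<le> real t
          \<and> real t \<le> (1 + \<alpha>) * real T / 2 then 0 else 1) = window_block m L j"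
        using window_parameters[OF assms(5,6)] by blast
      moreover have "sched_prob N k p i = real k / real N" if "i < N" for i
        using prems(5) that by (simp add: sched_prob_def)
      ultimately show ?thesis
        unfolding Let_def window
        by (intro stackelberg_window_block[OF assms(2,3,4) prems(4) _ prems(6)] small) simp_all
    qed
    done
qed

end
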